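(* Let $R\subseteq\mathbb N$ be sparse, $n\in\mathbb N^+$, $\mathbf A=(A_1,\dots,A_n)$ an $n$-tuple of operators on $R$ with $A_1\neq_R0$, and $\varepsilon>0$. Then there is $\Delta_0$ such that for all $\Delta\ge\Delta_0$ and all $z\in R^n_\Delta$, $$(1-\varepsilon)|A_1z_1|<|\mathbf A\cdot z|<(1+\varepsilon)|A_1z_1|.$$
   Context: Let $R\subseteq\mathbb N$ be infinite, enumerated increasingly as $(r_n)_{n\in\mathbb N}$; $\sigma:R\to R$ is the successor map $\sigma(r_n)=r_{n+1}$ and $\sigma^k$ its $k$-fold iterate ($\sigma^0=\mathrm{id}$). An operator on $R$ is a function $R\to\mathbb Z$, $z\mapsto a_m\sigma^m(z)+\dots+a_0\sigma^0(z)$ with $a_i\in\mathbb Z$. For an operator $A$: $A=_R0$ if $Az=0$ for all $z\in R$; $A>_R0$ (resp. $A<_R0$) if $Az>0$ (resp. $Az<0$) for all but finitely many $z\in R$; $A\ne_R0$ means not $A=_R0$. $R$ is sparse if every operator $A$ satisfies (S1) $A=_R0$ or $A>_R0$ or $A<_R0$; and (S2) if $A>_R0$ then there is $\Delta\in\mathbb N$ with $A(\sigma^\Delta z)>z$ for all $z\in R$. For an $n$-tuple of operators $\mathbf A$ and $z\in R^n$, $\mathbf A\cdot z=A_1z_1+\dots+A_nz_n$. For $\tilde R\subseteq R$ and $\Delta\in\mathbb N$, $\tilde R^n_\Delta=\{(z_1,\dots,z_n)\in\tilde R^n: z_i\ge\sigma^\Delta z_{i+1}\text{ for }1\le i\le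 n\}$ where $z_{n+1}:=\min\tilde R$. *)

theory Defs
  imports Complex_Main
begin

text \<open>Successor map on R: the least element of R strictly greater than z.
  For infinite R and z in R this is sigma(r_n) = r_(n+1).\<close>
definition rsucc :: "nat set \<Rightarrow> nat \<Rightarrow> nat" where
  "rsucc R z = (LEAST y. y \<in> R \<and> z < y)"

abbreviation rsig :: "nat set \<Rightarrow> nat \<Rightarrow> nat \<Rightarrow> nat" where
  "rsig R k \<equiv> rsucc R ^^ k"

text \<open>An operator a_m sigma^m + ... + a_0 sigma^0 is represented by its coefficient
  list [a_0, ..., a_m].\<close>
definition op_apply :: "nat set \<Rightarrow> int list \<Rightarrow> nat \<Rightarrow> int" where
  "op_apply R A z = (\<Sum>i<length A. A ! i * int (rsig R i z))"

definition op_zero :: "nat set \<Rightarrow> int list \<Rightarrow> bool" where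
  "op_zero R A \<longleftrightarrow> (\<forall>z\<in>R. op_apply R A z = 0)"

definition op_pos :: "nat set \<Rightarrow> int list \<Rightarrow> bool" where
  "op_pos R A \<longleftrightarrow> finite {z\<in>R. \<not> op_apply R A z > 0}"

definition op_neg :: "nat set \<Rightarrow> int list \<Rightarrow> bool" where
  "op_neg R A \<longleftrightarrow> finite {z\<in>R. \<not> op_apply R A z < 0}"

definition sparse :: "nat set \<Rightarrow> bool" where
  "sparse R \<longleftrightarrow> infinite R \<and>
     (\<forall>A. op_zero R A \<or> op_pos R A \<or> op_neg R A) \<and>
     (\<forall>A. op_pos R A \<longrightarrow> (\<exists>\<Delta>. \<forall>z\<in>R. op_apply R A (rsig R \<Delta> z) > int z))"

text \<open>R^n_Delta: tuples z_1..z_n (as a function on indices 1..n) in R with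
  z_i >= sigma^Delta z_(i+1), where z_(n+1) := min R.\<close>
definition tuples_Delta :: "nat set \<Rightarrow> nat \<Rightarrow> nat \<Rightarrow> (nat \<Rightarrow> nat) set" where
  "tuples_Delta R n \<Delta> = {z. (\<forall>i\<in>{1..n}. z i \<in> R) \<and>
      (\<forall>i\<in>{1..n}. z i \<ge> rsig R \<Delta> (if i = n then (LEAST x. x \<in> R) else z (Suc i)))}"

definition tuple_apply :: "nat set \<Rightarrow> nat \<Rightarrow> (nat \<Rightarrow> int list) \<Rightarrow> (nat \<Rightarrow> nat) \<Rightarrow> int" where
  "tuple_apply R n As z = (\<Sum>i=1..n. op_apply R (As i) (z i))"

end

theory Submission
  imports Defs "HOL-Library.Infinite_Set"
begin

text \<open>Sparseness makes every nonzero operator eventually dominate any multiple of its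
  argument once the argument is shifted far enough: iterate (S2) on the operators
  \<open>P \<sigma>\<^bsup>K+1\<^esup> - M\<close>, which are positive by the previous step.  In a tuple of \<open>R\<^sup>n\<^sub>\<Delta>\<close> all of
  \<open>z\<^sub>2, \<dots>, z\<^sub>n\<close> lie below some \<open>y\<close> with \<open>\<sigma>\<^sup>\<Delta> y \<le> z\<^sub>1\<close>, so every \<open>A\<^sub>i z\<^sub>i\<close> with \<open>i \<ge> 2\<close>
  is bounded by a constant times \<open>\<sigma>\<^sup>m y\<close>, whereas for large \<open>\<Delta>\<close> the term \<open>A\<^sub>1 z\<^sub>1\<close> is
  larger than any prescribed multiple of \<open>\<sigma>\<^sup>m y\<close>.\<close>

lemma rsucc_in_less:
  assumes "infinite R"
  shows "rsucc R x \<in> R \<and> x < rsucc R x"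
proof -
  obtain y where "y \<in> R" "x < y"
    using assms by (meson finite_nat_set_iff_bounded_le not_le)
  then show ?thesis
    unfolding rsucc_def by (metis (mono_tags, lifting) LeastI_ex)
qed

lemma rsucc_mono:
  assumes "infinite R" "x \<le> y"
  shows "rsucc R x \<le> rsucc R y"
  using rsucc_in_less[OF assms(1), of y] assms(2) unfolding rsucc_def
  by (simp add: Least_le)

lemma rsig_mono:
  assumes "infinite R" "x \<le> y"
  shows "rsig R k x \<le> rsig R k y"
  using assms by (induction k) (auto simp: rsucc_mono)

lemma le_rsig:
  assumes "infinite R"
  shows "x \<le> rsig R k x"
  using assms by (induction k) (auto dest: rsucc_in_less[of R] intro: order.trans less_imp_le)

lemma rsig_le_rsig:
  assumes "infinite R" "i \<le> j"
  shows "rsig R i x \<le> rsig R j x"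
proof -
  have "rsig R j x = rsig R (j - i) (rsig R i x)"
    using assms(2) by (metis funpow_add le_add_diff_inverse2 o_apply)
  then show ?thesis
    using le_rsig[OF assms(1)] by metis
qed

lemma rsig_in:
  assumes "infinite R" "x \<in> R"
  shows "rsig R k x \<in> R"
  using assms by (induction k) (auto dest: rsucc_in_less[of R])

lemma rsig_enumerate:
  assumes "infinite R"
  shows "rsig R j (enumerate R k) = enumerate R (k + j)"
  using assms by (induction j) (auto simp: rsucc_def enumerate_Suc'')

lemma rsig_preimage:
  assumes "infinite R" "x \<in> R" "y \<in> R" "rsig R D y \<le> x"
  obtains w where "w \<in> R" "y \<le> w" "rsig R D w = x"
proof -
  obtain kx ky where kx: "x = enumerate R kx" and ky: "y = enumerate R ky"
    using enumerate_Ex[OF assms(1)] assms(2,3) by metis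
  have "ky + D \<le> kx"
    using assms(1,4) unfolding kx ky rsig_enumerate[OF assms(1)] by simp
  then show thesis
    using that[of "enumerate R (kx - D)"] assms(1)
    by (simp add: kx ky enumerate_in_set rsig_enumerate)
qed

lemma op_apply_Cons: "op_apply R (a # A) z = a * int z + op_apply R A (rsucc R z)"
  unfolding op_apply_def length_Cons sum.lessThan_Suc_shift
  by (simp add: funpow_Suc_right del: funpow.simps)

lemma op_apply_replicate_zero: "op_apply R (replicate K 0 @ A) z = op_apply R A (rsig R K z)"
  by (induction K arbitrary: z)
    (auto simp: op_apply_Cons funpow_Suc_right simp del: funpow.simps)

lemma op_apply_map_uminus: "op_apply R (map uminus A) z = - op_apply R A z"
  unfolding op_apply_def by (simp add: sum_negf[symmetric])

lemma abs_op_apply_le: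
  assumes "infinite R" "length A \<le> m"
  shows "\<bar>op_apply R A w\<bar> \<le> (\<Sum>j<length A. \<bar>A ! j\<bar>) * int (rsig R m w)"
proof -
  have "\<bar>op_apply R A w\<bar> \<le> (\<Sum>j<length A. \<bar>A ! j * int (rsig R j w)\<bar>)"
    unfolding op_apply_def by (rule sum_abs)
  also have "\<dots> \<le> (\<Sum>j<length A. \<bar>A ! j\<bar> * int (rsig R m w))"
    using rsig_le_rsig[OF assms(1)] assms(2)
    by (intro sum_mono) (simp add: abs_mult mult_left_mono)
  also have "\<dots> = (\<Sum>j<length A. \<bar>A ! j\<bar>) * int (rsig R m w)"
    by (simp add: sum_distrib_right)
  finally show ?thesis .
qed

lemma abs_op_apply_uniform_bound:
  assumes "infinite R" "finite I"
  obtains C m where "0 \<le> C" "\<And>i w. i \<in> I \<Longrightarrow> \<bar>op_apply R (As i) w\<bar> \<le> C * int (rsig R m w)"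
proof
  let ?m = "\<Sum>i\<in>I. length (As i)" and ?C = "\<Sum>i\<in>I. \<Sum>j<length (As i). \<bar>As i ! j\<bar>"
  show "0 \<le> ?C"
    by (intro sum_nonneg) auto
  fix i w assume i: "i \<in> I"
  have "\<bar>op_apply R (As i) w\<bar> \<le> (\<Sum>j<length (As i). \<bar>As i ! j\<bar>) * int (rsig R ?m w)"
    using assms i by (intro abs_op_apply_le member_le_sum) auto
  also have "\<dots> \<le> ?C * int (rsig R ?m w)"
    using assms(2) i by (intro mult_right_mono member_le_sum) auto
  finally show "\<bar>op_apply R (As i) w\<bar> \<le> ?C * int (rsig R ?m w)" .
qed

lemma sparse_op_pos_growth:
  assumes sp: "sparse R" and P: "op_pos R P"
  shows "\<exists>K. \<forall>z\<in>R. int M * int z < op_apply R P (rsig R K z)"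
proof (induction M)
  case 0
  from sp P obtain D where "\<forall>z\<in>R. int z < op_apply R P (rsig R D z)"
    unfolding sparse_def by blast
  then show ?case
    by (metis of_nat_0 mult_zero_left of_nat_0_le_iff order.strict_trans1)
next
  case (Suc M)
  have inf: "infinite R"
    using sp by (simp add: sparse_def)
  from Suc obtain K where K: "\<forall>z\<in>R. int M * int z < op_apply R P (rsig R K z)"
    by blast
  define Q where "Q = - int M # replicate K 0 @ P"
  have Q: "op_apply R Q z = op_apply R P (rsig R (Suc K) z) - int M * int z" for z
    by (simp add: Q_def op_apply_Cons op_apply_replicate_zero funpow_Suc_right del: funpow.simps)
  have "0 < op_apply R Q z" if "z \<in> R" for z
  proof -
    have "int M * int z \<le> int M * int (rsucc R z)"
      using rsucc_in_less[OF inf, of z] by (simp add: mult_left_mono)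
    also have "\<dots> < op_apply R P (rsig R (Suc K) z)"
      using K rsucc_in_less[OF inf, of z] by (simp add: funpow_Suc_right del: funpow.simps)
    finally show ?thesis
      by (simp add: Q)
  qed
  then have "{z \<in> R. \<not> 0 < op_apply R Q z} = {}"
    by blast
  then have "op_pos R Q"
    unfolding op_pos_def by (metis finite.emptyI)
  with sp obtain D where D: "\<forall>z\<in>R. int z < op_apply R Q (rsig R D z)"
    unfolding sparse_def by blast
  have "int (Suc M) * int z < op_apply R P (rsig R (Suc K + D) z)" if "z \<in> R" for z
  proof -
    have "int M * int z \<le> int M * int (rsig R D z)"
      using le_rsig[OF inf] by (simp add: mult_left_mono)
    moreover have "int z < op_apply R P (rsig R (Suc K + D) z) - int M * int (rsig R D z)"
      using D that by (simp add: Q funpow_add)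
    ultimately show ?thesis
      by (simp add: distrib_right)
  qed
  then show ?case
    by blast
qed

lemma sparse_op_nonzero_dominates:
  assumes sp: "sparse R" and A: "\<not> op_zero R A"
  shows "\<exists>K. \<forall>z\<in>R. int M * int z < \<bar>op_apply R A (rsig R K z)\<bar>"
proof -
  obtain B where "op_pos R B" and B: "\<And>w. op_apply R B w \<le> \<bar>op_apply R A w\<bar>"
  proof -
    have "op_pos R A \<or> op_pos R (map uminus A)"
      using sp A unfolding sparse_def op_pos_def op_neg_def op_apply_map_uminus by auto
    then show thesis
      using that by (auto simp: op_apply_map_uminus)
  qed
  then show ?thesis
    using sparse_op_pos_growth[OF sp] by (meson B order.strict_trans2)
qed

lemma tuples_DeltaD:
  assumes "z \<in> tuples_Delta R n \<Delta>" "i \<in> {1..n}"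
  shows "z i \<in> R" and "rsig R \<Delta> (if i = n then (LEAST x. x \<in> R) else z (Suc i)) \<le> z i"
  using assms unfolding tuples_Delta_def by blast+

lemma tuples_Delta_antimono:
  assumes "infinite R" "z \<in> tuples_Delta R n \<Delta>" "1 \<le> i" "i \<le> j" "j \<le> n"
  shows "z j \<le> z i"
  using assms(4,5)
proof (induction j rule: dec_induct)
  case (step k)
  have "z (Suc k) \<le> rsig R \<Delta> (z (Suc k))"
    using le_rsig[OF assms(1)] .
  also have "\<dots> \<le> z k"
    using tuples_DeltaD(2)[OF assms(2), of k] assms(3) step by auto
  finally show ?case
    using step by simp
qed simp

lemma tuples_Delta_head:
  assumes "infinite R" "1 \<le> n" "z \<in> tuples_Delta R n \<Delta>"
  obtains y where "y \<in> R" "rsig R \<Delta> y \<le> z 1" "\<forall>i\<in>{2..n}. z i \<le> y"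
proof (cases "n = 1")
  case True
  have "(LEAST x. x \<in> R) \<in> R"
    using assms(1) by (metis LeastI finite.emptyI ex_in_conv)
  then show thesis
    using that assms(3) True unfolding tuples_Delta_def by auto
next
  case False
  have "z 2 \<in> R" "rsig R \<Delta> (z 2) \<le> z 1"
    using tuples_DeltaD[OF assms(3), of 2] tuples_DeltaD(2)[OF assms(3), of 1] assms(2) False
    by (auto simp: numeral_2_eq_2)
  then show thesis
    using that tuples_Delta_antimono[OF assms(1,3), of 2] by auto
qed

lemma tuple_apply_head_tail:
  assumes "1 \<le> n"
  shows "tuple_apply R n As z = op_apply R (As 1) (z 1) + (\<Sum>i=2..n. op_apply R (As i) (z i))"
  using assms unfolding tuple_apply_def by (simp add: sum.atLeast_Suc_atMost numeral_2_eq_2)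

lemma tuple_apply_tail_head_bounds:
  assumes inf: "infinite R" and "1 \<le> n" and z: "z \<in> tuples_Delta R n \<Delta>" and "K + m \<le> \<Delta>"
    and "0 \<le> C" and bound: "\<And>i w. i \<in> {2..n} \<Longrightarrow> \<bar>op_apply R (As i) w\<bar> \<le> C * int (rsig R m w)"
    and dom: "\<forall>w\<in>R. int M * int w < \<bar>op_apply R (As 1) (rsig R K w)\<bar>"
  obtains t where
    "\<bar>\<Sum>i=2..n. op_apply R (As i) (z i)\<bar> \<le> int (n - 1) * C * int t"
    "int M * int t < \<bar>op_apply R (As 1) (z 1)\<bar>"
proof -
  obtain y where y: "y \<in> R" "rsig R \<Delta> y \<le> z 1" and below: "\<forall>i\<in>{2..n}. z i \<le> y"
    using tuples_Delta_head[OF inf \<open>1 \<le> n\<close> z] by blast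
  have z1: "z 1 \<in> R"
    using tuples_DeltaD(1)[OF z] \<open>1 \<le> n\<close> by simp
  have "rsig R (K + m) y \<le> z 1"
    using rsig_le_rsig[OF inf \<open>K + m \<le> \<Delta>\<close>] y(2) by (rule order.trans)
  then obtain w where w: "w \<in> R" "y \<le> w" "rsig R (K + m) w = z 1"
    using rsig_preimage[OF inf z1 y(1)] by blast
  show thesis
  proof
    have "\<bar>\<Sum>i=2..n. op_apply R (As i) (z i)\<bar> \<le> (\<Sum>i=2..n. \<bar>op_apply R (As i) (z i)\<bar>)"
      by (rule sum_abs)
    also have "\<dots> \<le> of_nat (card {2..n}) * (C * int (rsig R m y))"
    proof (rule sum_bounded_above)
      fix i assume i: "i \<in> {2..n}"
      have "C * int (rsig R m (z i)) \<le> C * int (rsig R m y)"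
        using \<open>0 \<le> C\<close> rsig_mono[OF inf bspec[OF below i]] by (simp add: mult_left_mono)
      with bound[OF i, of "z i"] show "\<bar>op_apply R (As i) (z i)\<bar> \<le> C * int (rsig R m y)"
        by (rule order.trans)
    qed
    finally show "\<bar>\<Sum>i=2..n. op_apply R (As i) (z i)\<bar> \<le> int (n - 1) * C * int (rsig R m y)"
      by (simp add: mult.assoc)
  next
    have "int M * int (rsig R m y) \<le> int M * int (rsig R m w)"
      using rsig_mono[OF inf w(2)] by (simp add: mult_left_mono)
    also have "\<dots> < \<bar>op_apply R (As 1) (rsig R K (rsig R m w))\<bar>"
      using dom rsig_in[OF inf w(1)] by blast
    finally show "int M * int (rsig R m y) < \<bar>op_apply R (As 1) (z 1)\<bar>"
      using w(3) by (simp add: funpow_add)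
  qed
qed

lemma abs_of_int_less_by_common_scale:
  fixes s a C :: int and M t :: nat and e :: real
  assumes "\<bar>s\<bar> \<le> C * int t" and "int M * int t < \<bar>a\<bar>"
    and "real_of_int C \<le> real M * e" and "0 < e"
  shows "\<bar>real_of_int s\<bar> < e * \<bar>real_of_int a\<bar>"
proof -
  have "real_of_int \<bar>s\<bar> \<le> real_of_int (C * int t)"
    using assms(1) by (simp only: of_int_le_iff)
  then have "\<bar>real_of_int s\<bar> \<le> real_of_int C * real t"
    by simp
  also have "\<dots> \<le> real M * e * real t"
    using assms(3) by (rule mult_right_mono) simp
  also have "\<dots> < \<bar>real_of_int a\<bar> * e"
  proof -
    have "real_of_int (int M * int t) < real_of_int \<bar>a\<bar>"
      using assms(2) by (simp only: of_int_less_iff)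
    then show ?thesis
      using assms(4) by (simp add: mult.commute mult.left_commute)
  qed
  finally show ?thesis
    by (simp add: mult.commute)
qed

lemma abs_add_relative_bounds:
  fixes a s e :: "'a::linordered_idom"
  assumes "\<bar>s\<bar> < e * \<bar>a\<bar>"
  shows "(1 - e) * \<bar>a\<bar> < \<bar>a + s\<bar> \<and> \<bar>a + s\<bar> < (1 + e) * \<bar>a\<bar>"
  using assms abs_triangle_ineq[of a s] abs_triangle_ineq2[of a "- s"]
  by (simp add: algebra_simps)

theorem mainTheorem4:
  fixes R :: "nat set" and n :: nat and As :: "nat \<Rightarrow> int list" and \<epsilon> :: real
  assumes "sparse R"
    and "n \<ge> 1"
    and "\<not> op_zero R (As 1)"
    and "\<epsilon> > 0"
  shows "\<exists>\<Delta>0. \<forall>\<Delta>\<ge>\<Delta>0. \<forall>z\<in>tuples_Delta R n \<Delta>.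
     (1 - \<epsilon>) * \<bar>real_of_int (op_apply R (As 1) (z 1))\<bar> < \<bar>real_of_int (tuple_apply R n As z)\<bar>
   \<and> \<bar>real_of_int (tuple_apply R n As z)\<bar> < (1 + \<epsilon>) * \<bar>real_of_int (op_apply R (As 1) (z 1))\<bar>"
proof -
  have inf: "infinite R"
    using assms(1) by (simp add: sparse_def)
  obtain C m where "0 \<le> C" and bound: "\<And>i w. i \<in> {2..n} \<Longrightarrow> \<bar>op_apply R (As i) w\<bar> \<le> C * int (rsig R m w)"
    using abs_op_apply_uniform_bound[OF inf, of "{2..n}"] by blast
  obtain M :: nat where M: "real_of_int (int (n - 1) * C) < real M * \<epsilon>"
    using reals_Archimedean3[OF assms(4)] by blast
  obtain K where dom: "\<forall>w\<in>R. int M * int w < \<bar>op_apply R (As 1) (rsig R K w)\<bar>"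
    using sparse_op_nonzero_dominates[OF assms(1,3)] by blast
  have tail_small: "\<bar>real_of_int (\<Sum>i=2..n. op_apply R (As i) (z i))\<bar> < \<epsilon> * \<bar>real_of_int (op_apply R (As 1) (z 1))\<bar>"
    if \<Delta>: "K + m \<le> \<Delta>" and z: "z \<in> tuples_Delta R n \<Delta>" for \<Delta> z
  proof -
    obtain t where "\<bar>\<Sum>i=2..n. op_apply R (As i) (z i)\<bar> \<le> int (n - 1) * C * int t"
      and "int M * int t < \<bar>op_apply R (As 1) (z 1)\<bar>"
      using tuple_apply_tail_head_bounds[where As = As, OF inf assms(2) z \<Delta> \<open>0 \<le> C\<close> bound dom] .
    from this less_imp_le[OF M] assms(4) show ?thesis
      by (rule abs_of_int_less_by_common_scale)
  qed
  show ?thesis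
    unfolding tuple_apply_head_tail[OF assms(2)] of_int_add
    by (intro exI[of _ "K + m"] allI impI ballI abs_add_relative_bounds tail_small)
qed

end
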